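(* Let $I,J\subset\mathbb{R}$ be open intervals, $M=I\times J$ with coordinates $(u,v)$, let $q,f:I\to\mathbb{R}$ be smooth functions of $u$ and $r,g:J\to\mathbb{R}$ smooth functions of $v$, with $f(u)g(v)(1+q(u)r(v))^2\neq0$ on $M$. Then: (i) there exist smooth $F_1:I\to\mathrm{SL}_2\mathbb{R}$, $F_2:J\to\mathrm{SL}_2\mathbb{R}$ with $F_1^{-1}dF_1=\begin{pmatrix}q&-q^2\\1&-q\end{pmatrix}f\,du$ and $F_2^{-1}dF_2=\begin{pmatrix}r&-r^2\\1&-r\end{pmatrix}g\,dv$, and for any such solution $\varphi=F_1F_2^t:M\to\mathbb{H}^3_1(-1)$ is a conformal timelike immersion of constant mean curvature $\pm1$ whose induced metric is conformal to $(1+qr)^2f g\,du\,dv$; (ii) there exist smooth $F_1:I\to\mathrm{SL}_2\mathbb{R}$, $F_2:J\to\mathrm{SL}_2\mathbb{R}$ with $F_1^{-1}dF_1=\begin{pmatrix}q&-q^2\\1&-q\end{pmatrix}f\,du$ and $(dF_2^{-1})F_2=\begin{pmatrix}r&1\\-r^2&-r\end{pmatrix}g\,dv$, and for any such solution $\psi=F_1F_2^{-1}:M\to\mathbb{H}^3_1(-1)$ is a conformal timelike immersion of constant mean curvature $\pm1$ whose induced metric is conformal to $(1+qr)^2fg\,du\,dv$.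
   Context: $\mathbb{E}^4_2$ is $\mathbb{R}^4$ with metric $-(dx_0)^2-(dx_1)^2+(dx_2)^2+(dx_3)^2$, identified with $M_2(\mathbb{R})$ via $(x_0,x_1,x_2,x_3)\mapsto \begin{pmatrix}x_0+x_3& x_1+x_2\\ -x_1+x_2 & x_0-x_3\end{pmatrix}$, so $\langle u,v\rangle=\tfrac12\{\operatorname{tr}(uv)-\operatorname{tr}u\operatorname{tr}v\}$ and $\mathbb{H}^3_1(-1)=\{\langle x,x\rangle=-1\}=\mathrm{SL}_2\mathbb{R}$. Conformal timelike with null coordinates $(u,v)$: $\langle\varphi_u,\varphi_u\rangle=\langle\varphi_v,\varphi_v\rangle=0\neq\langle\varphi_u,\varphi_v\rangle$. Mean curvature w.r.t. unit normal $N$: $H=2e^{-\omega}\langle\varphi_{uv},N\rangle$ where the metric is $e^\omega du\,dv$; "constant mean curvature $\pm1$" means $H\equiv1$ or $H\equiv-1$ for the chosen unit normal. The metric $(1+qr)^2fg\,du\,dv$ is the induced metric of the timelike minimal surface in Minkowski 3-space with Weierstrass data $(q,f)$, $(r,g)$. *)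

theory Defs
  imports "HOL-Analysis.Analysis"
begin

text \<open>E^4_2 is identified with 2x2 real matrices (real^2^2); the indefinite
inner product is <X,Y> = (tr(XY) - tr X tr Y)/2, so <X,X> = - det X and
H^3_1(-1) = {det X = 1} = SL_2(R).\<close>

definition inner42 :: "real^2^2 \<Rightarrow> real^2^2 \<Rightarrow> real" where
  "inner42 X Y = (trace (X ** Y) - trace X * trace Y) / 2"

definition mat2 :: "real \<Rightarrow> real \<Rightarrow> real \<Rightarrow> real \<Rightarrow> real^2^2" where
  "mat2 a b c d = vector [vector [a, b], vector [c, d]]"

definition smooth_on :: "real set \<Rightarrow> (real \<Rightarrow> 'a::real_normed_vector) \<Rightarrow> bool" where
  "smooth_on S F \<longleftrightarrow>
     (\<forall>n. \<forall>x\<in>S. (((\<lambda>G t. vector_derivative G (at t)) ^^ n) F) differentiable (at x))"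

definition pu :: "(real \<times> real \<Rightarrow> real^2^2) \<Rightarrow> real \<times> real \<Rightarrow> real^2^2" where
  "pu P p = vector_derivative (\<lambda>s. P (s, snd p)) (at (fst p))"

definition pv :: "(real \<times> real \<Rightarrow> real^2^2) \<Rightarrow> real \<times> real \<Rightarrow> real^2^2" where
  "pv P p = vector_derivative (\<lambda>t. P (fst p, t)) (at (snd p))"

definition meancurv :: "(real \<times> real \<Rightarrow> real^2^2) \<Rightarrow> (real \<times> real \<Rightarrow> real^2^2) \<Rightarrow> real \<times> real \<Rightarrow> real" where
  "meancurv P N p = 2 * inner42 (pv (pu P) p) (N p) / (2 * inner42 (pu P p) (pv P p))"

definition cmc_conformal_timelike :: "(real \<times> real) set \<Rightarrow> (real \<times> real \<Rightarrow> real^2^2) \<Rightarrow> bool" where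
  "cmc_conformal_timelike M P \<longleftrightarrow>
     (\<forall>p\<in>M. P differentiable (at p) \<and> det (P p) = 1
        \<and> (\<lambda>t. pu P (fst p, t)) differentiable (at (snd p))
        \<and> inner42 (pu P p) (pu P p) = 0 \<and> inner42 (pv P p) (pv P p) = 0
        \<and> inner42 (pu P p) (pv P p) \<noteq> 0)
   \<and> (\<exists>N. continuous_on M N
        \<and> (\<forall>p\<in>M. inner42 (N p) (N p) = 1 \<and> inner42 (N p) (P p) = 0
                 \<and> inner42 (N p) (pu P p) = 0 \<and> inner42 (N p) (pv P p) = 0)
        \<and> ((\<forall>p\<in>M. meancurv P N p = 1) \<or> (\<forall>p\<in>M. meancurv P N p = -1)))"

definition metric_conformal_to ::
  "(real \<times> real) set \<Rightarrow> (real \<times> real \<Rightarrow> real^2^2) \<Rightarrow> (real \<Rightarrow> real) \<Rightarrow> (real \<Rightarrow> real)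
     \<Rightarrow> (real \<Rightarrow> real) \<Rightarrow> (real \<Rightarrow> real) \<Rightarrow> bool" where
  "metric_conformal_to M P q f r g \<longleftrightarrow>
     (\<exists>\<rho>::real \<times> real \<Rightarrow> real. \<forall>p\<in>M. \<rho> p > 0 \<and>
        2 * inner42 (pu P p) (pv P p)
          = \<rho> p * ((1 + q (fst p) * r (snd p))^2 * f (fst p) * g (snd p)))"

definition sol_left :: "real set \<Rightarrow> (real \<Rightarrow> real) \<Rightarrow> (real \<Rightarrow> real) \<Rightarrow> (real \<Rightarrow> real^2^2) \<Rightarrow> bool" where
  "sol_left I q f F \<longleftrightarrow> smooth_on I F \<and>
     (\<forall>u\<in>I. det (F u) = 1 \<and>
        (\<exists>D. (F has_vector_derivative D) (at u) \<and>
             matrix_inv (F u) ** D = f u *\<^sub>R (mat2 (q u) (- ((q u)^2)) 1 (- (q u)))))"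

definition sol_right :: "real set \<Rightarrow> (real \<Rightarrow> real) \<Rightarrow> (real \<Rightarrow> real) \<Rightarrow> (real \<Rightarrow> real^2^2) \<Rightarrow> bool" where
  "sol_right J r g F \<longleftrightarrow> smooth_on J F \<and>
     (\<forall>v\<in>J. det (F v) = 1 \<and>
        (\<exists>D. ((\<lambda>t. matrix_inv (F t)) has_vector_derivative D) (at v) \<and>
             D ** F v = g v *\<^sub>R (mat2 (r v) 1 (- ((r v)^2)) (- (r v)))))"

end

theory Submission
  imports Defs
begin

(* Write the surface as P(u,v) = L(u) R(v) with L' = L A(u) and R' = B(v) R, where
   A = f W(q), B = g W(r)^T and W(q) = weierstrass_matrix q = [[q,-q^2],[1,-q]]: in part (i)
   L = F1 and R = F2^T, in part (ii) L = F1 and R = F2^-1.  Since <X,X> = -det X, the form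
   <_,_> is invariant under X |-> L X R for L, R in SL_2, so everything is computed at the
   identity frame: P_u = L A R, P_v = L B R, P_uv = L A B R.  There A and B are null,
   2<A,B> = (1+qr)^2 f g, and N0 = normal_matrix q r is a unit vector orthogonal to 1, A and
   B with 2<A B, N0> = (1+qr)^2 f g.  Hence L N0 R is a unit normal, the metric is
   (1+qr)^2 f g du dv and the mean curvature is 1.  The frames exist because F' = F X with
   smooth X has a smooth solution, the Picard series, and det F stays 1 since X is trace
   free. *)

section \<open>Two by two matrices\<close>

lemma mat2_nth [simp]:
  "mat2 a b c d $ 1 $ 1 = a" "mat2 a b c d $ 1 $ 2 = b"
  "mat2 a b c d $ 2 $ 1 = c" "mat2 a b c d $ 2 $ 2 = d"
  by (simp_all add: mat2_def)

lemma matrix_2x2_eq_iff: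
  "(A::'a^2^2) = B \<longleftrightarrow> A$1$1 = B$1$1 \<and> A$1$2 = B$1$2 \<and> A$2$1 = B$2$1 \<and> A$2$2 = B$2$2"
  by (auto simp: vec_eq_iff forall_2)

lemma matrix_mult_2x2_nth [simp]:
  "((A::'a::comm_semiring_1^2^2) ** B) $ i $ j = A$i$1 * B$1$j + A$i$2 * B$2$j"
  by (simp add: matrix_matrix_mult_def sum_2)

lemma transpose_nth [simp]: "transpose A $ i $ j = A $ j $ i"
  by (simp add: transpose_def)

lemma mat_nth [simp]: "mat a $ i $ j = (if i = j then a else 0)"
  by (simp add: mat_def)

lemma trace_2: "trace (A::'a::comm_semiring_1^2^2) = A$1$1 + A$2$2"
  by (simp add: trace_def sum_2)

lemma mat2_decompose:
  "mat2 a b c d = a *\<^sub>R mat2 1 0 0 0 + b *\<^sub>R mat2 0 1 0 0 + c *\<^sub>R mat2 0 0 1 0 + d *\<^sub>R mat2 0 0 0 1"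
  by (simp add: matrix_2x2_eq_iff)

lemma continuous_on_mat2 [continuous_intros]:
  "continuous_on S a \<Longrightarrow> continuous_on S b \<Longrightarrow> continuous_on S c \<Longrightarrow> continuous_on S d \<Longrightarrow>
    continuous_on S (\<lambda>x. mat2 (a x) (b x) (c x) (d x))"
  by (subst mat2_decompose) (intro continuous_intros)

lemma bounded_bilinear_matrix_mult:
  "bounded_bilinear ((**) :: real^'n^'m \<Rightarrow> real^'p^'n \<Rightarrow> real^'p^'m)"
  unfolding bilinear_conv_bounded_bilinear[symmetric] bilinear_def linear_iff
  by (simp add: vec_eq_iff matrix_matrix_mult_def sum_distrib_left sum.distrib algebra_simps)

lemma bounded_linear_transpose: "bounded_linear (transpose :: real^'n^'m \<Rightarrow> real^'m^'n)"
  unfolding linear_conv_bounded_linear[symmetric] linear_iff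
  by (simp add: vec_eq_iff)

lemma inner42_2x2:
  "inner42 A B = (A$1$2 * B$2$1 + A$2$1 * B$1$2 - A$1$1 * B$2$2 - A$2$2 * B$1$1) / 2"
  by (simp add: inner42_def trace_2 algebra_simps)

lemma inner42_polarization: "inner42 A B = (det A + det B - det (A + B)) / 2"
  by (simp add: inner42_2x2 det_2 algebra_simps)

lemma inner42_scaleR [simp]:
  "inner42 (c *\<^sub>R A) B = c * inner42 A B" "inner42 A (c *\<^sub>R B) = c * inner42 A B"
  by (simp_all add: inner42_2x2 algebra_simps)

lemma inner42_transpose [simp]: "inner42 (transpose A) (transpose B) = inner42 A B"
  by (simp add: inner42_2x2 algebra_simps)

lemma inner42_mult_SL2:
  assumes "det L = 1" "det R = 1"
  shows "inner42 (L ** A ** R) (L ** B ** R) = inner42 A B"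
proof -
  have "L ** A ** R + L ** B ** R = L ** (A + B) ** R"
    by (simp add: matrix_2x2_eq_iff algebra_simps)
  then show ?thesis
    by (simp add: inner42_polarization det_mul assms)
qed

definition adj2 :: "real^2^2 \<Rightarrow> real^2^2" where
  "adj2 A = mat2 (A$2$2) (- A$1$2) (- A$2$1) (A$1$1)"

lemma det_adj2 [simp]: "det (adj2 A) = det A"
  by (simp add: adj2_def det_2)

lemma adj2_adj2 [simp]: "adj2 (adj2 A) = A"
  by (simp add: adj2_def matrix_2x2_eq_iff)

lemma bounded_linear_adj2: "bounded_linear adj2"
  unfolding linear_conv_bounded_linear[symmetric] linear_iff
  by (simp add: adj2_def matrix_2x2_eq_iff)

lemma adj2_inverse_SL2:
  assumes "det A = 1"
  shows "A ** adj2 A = mat 1" "adj2 A ** A = mat 1"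
  using assms by (simp_all add: matrix_2x2_eq_iff adj2_def det_2 algebra_simps)

lemma matrix_inv_SL2:
  assumes "det A = 1"
  shows "matrix_inv A = adj2 A"
  unfolding matrix_inv_def
proof (rule some_equality)
  fix B assume "A ** B = mat 1 \<and> B ** A = mat 1"
  have "B = B ** (A ** adj2 A)"
    using adj2_inverse_SL2(1)[OF assms] by simp
  also have "\<dots> = (B ** A) ** adj2 A"
    by (simp add: matrix_mul_assoc)
  also have "\<dots> = adj2 A"
    using \<open>A ** B = mat 1 \<and> B ** A = mat 1\<close> by simp
  finally show "B = adj2 A" .
qed (use adj2_inverse_SL2[OF assms] in simp)

lemma has_real_derivative_matrix_entry:
  fixes F :: "real \<Rightarrow> real^'n^'m"
  assumes "(F has_vector_derivative D) (at u)"
  shows "((\<lambda>u. F u $ i $ j) has_real_derivative D $ i $ j) (at u)"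
proof -
  have "bounded_linear (\<lambda>A::real^'n^'m. A $ i $ j)"
    by (rule bounded_linear_compose[OF bounded_linear_vec_nth bounded_linear_vec_nth])
  from bounded_linear.has_vector_derivative[OF this assms] show ?thesis
    by (simp add: has_real_derivative_iff_has_vector_derivative)
qed

lemma det_constant_if_traceless:
  fixes F X :: "real \<Rightarrow> real^2^2"
  assumes "is_interval I" "u0 \<in> I" "u \<in> I"
    and F: "\<And>u. u \<in> I \<Longrightarrow> (F has_vector_derivative F u ** X u) (at u)"
    and X: "\<And>u. u \<in> I \<Longrightarrow> trace (X u) = 0"
  shows "det (F u) = det (F u0)"
proof -
  have "((\<lambda>u. det (F u)) has_real_derivative 0) (at u within I)" if "u \<in> I" for u
  proof -
    note entry = has_real_derivative_matrix_entry[OF F[OF that]]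
    have "((\<lambda>u. F u$1$1 * F u$2$2 - F u$1$2 * F u$2$1) has_real_derivative
        (F u$1$1 * (F u ** X u)$2$2 + (F u ** X u)$1$1 * F u$2$2)
        - (F u$1$2 * (F u ** X u)$2$1 + (F u ** X u)$1$2 * F u$2$1)) (at u)"
      by (intro DERIV_diff DERIV_mult' entry)
    moreover have "X u$2$2 = - X u$1$1"
      using X[OF that] by (simp add: trace_2)
    ultimately show ?thesis
      by (simp add: det_2 algebra_simps has_field_derivative_at_within)
  qed
  then obtain c where "\<And>x. x \<in> I \<Longrightarrow> det (F x) = c"
    using has_field_derivative_zero_constant[of I] assms(1) is_interval_convex by blast
  then show ?thesis
    using assms(2,3) by simp
qed

section \<open>Smooth functions of one variable\<close>

text \<open>smooth_on iterates vector_derivative, which is junk where no derivative exists;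
  Ck_on k instead carries the k derivatives as witnesses, so that closure properties
  follow by induction on k.\<close>

fun Ck_on :: "nat \<Rightarrow> real set \<Rightarrow> (real \<Rightarrow> 'a::real_normed_vector) \<Rightarrow> bool" where
  "Ck_on 0 S F \<longleftrightarrow> True"
| "Ck_on (Suc k) S F \<longleftrightarrow> (\<exists>F'. (\<forall>x\<in>S. (F has_vector_derivative F' x) (at x)) \<and> Ck_on k S F')"

lemma Ck_on_SucD: "Ck_on (Suc k) S F \<Longrightarrow> Ck_on k S F"
proof (induction k arbitrary: F)
  case (Suc k)
  then obtain F' where "\<forall>x\<in>S. (F has_vector_derivative F' x) (at x)" "Ck_on (Suc k) S F'"
    by auto
  with Suc.IH show ?case
    by auto
qed simp

lemma Ck_on_cong:
  assumes "open S" "\<And>x. x \<in> S \<Longrightarrow> F x = G x" "Ck_on k S F"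
  shows "Ck_on k S G"
proof (cases k)
  case (Suc k')
  then obtain F' where F': "\<forall>x\<in>S. (F has_vector_derivative F' x) (at x)" "Ck_on k' S F'"
    using assms(3) by auto
  have "(G has_vector_derivative F' x) (at x)" if "x \<in> S" for x
    using F'(1) that assms(1,2) by (metis has_vector_derivative_transform_within_open)
  with F'(2) Suc show ?thesis
    by auto
qed simp

lemma Ck_on_vector_derivative:
  assumes "open S" "Ck_on (Suc k) S F"
  shows "Ck_on k S (\<lambda>t. vector_derivative F (at t))"
proof -
  obtain F' where F': "\<forall>x\<in>S. (F has_vector_derivative F' x) (at x)" "Ck_on k S F'"
    using assms(2) by auto
  show ?thesis
    by (rule Ck_on_cong[OF assms(1) _ F'(2)]) (use F'(1) in \<open>auto intro: vector_derivative_at[symmetric]\<close>)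
qed

lemma Ck_on_const: "Ck_on k S (\<lambda>x. c)"
  by (induction k arbitrary: c) (auto intro!: exI[of _ "\<lambda>x. 0"] derivative_eq_intros)

lemma Ck_on_add:
  "Ck_on k S F \<Longrightarrow> Ck_on k S G \<Longrightarrow> Ck_on k S (\<lambda>x. F x + G x)"
proof (induction k arbitrary: F G)
  case (Suc k)
  then obtain F' G' where
    "\<forall>x\<in>S. (F has_vector_derivative F' x) (at x)" "Ck_on k S F'"
    "\<forall>x\<in>S. (G has_vector_derivative G' x) (at x)" "Ck_on k S G'"
    by auto
  with Suc.IH show ?case
    by (auto intro!: exI[of _ "\<lambda>x. F' x + G' x"] has_vector_derivative_add)
qed simp

lemma Ck_on_bounded_linear:
  assumes "bounded_linear L"
  shows "Ck_on k S F \<Longrightarrow> Ck_on k S (\<lambda>x. L (F x))"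
proof (induction k arbitrary: F)
  case (Suc k)
  then obtain F' where "\<forall>x\<in>S. (F has_vector_derivative F' x) (at x)" "Ck_on k S F'"
    by auto
  then have "\<forall>x\<in>S. ((\<lambda>x. L (F x)) has_vector_derivative L (F' x)) (at x)"
    using bounded_linear.has_vector_derivative[OF assms] by blast
  with Suc.IH \<open>Ck_on k S F'\<close> show ?case
    by auto
qed simp

lemma Ck_on_bounded_bilinear:
  fixes prod :: "'a::real_normed_vector \<Rightarrow> 'b::real_normed_vector \<Rightarrow> 'c::real_normed_vector"
  assumes "bounded_bilinear prod"
  shows "Ck_on k S F \<Longrightarrow> Ck_on k S G \<Longrightarrow> Ck_on k S (\<lambda>x. prod (F x) (G x))"
proof (induction k arbitrary: F G)
  case (Suc k)
  then obtain F' G' where F': "\<forall>x\<in>S. (F has_vector_derivative F' x) (at x)" "Ck_on k S F'"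
    and G': "\<forall>x\<in>S. (G has_vector_derivative G' x) (at x)" "Ck_on k S G'"
    by auto
  have "((\<lambda>x. prod (F x) (G x)) has_vector_derivative prod (F x) (G' x) + prod (F' x) (G x)) (at x)"
    if "x \<in> S" for x
    using F'(1) G'(1) that by (intro bounded_bilinear.has_vector_derivative[OF assms]) auto
  moreover have "Ck_on k S (\<lambda>x. prod (F x) (G' x) + prod (F' x) (G x))"
    using Suc.IH[of F G'] Suc.IH[of F' G] Suc.prems[THEN Ck_on_SucD] F'(2) G'(2)
    by (intro Ck_on_add) simp_all
  ultimately show ?case
    by (intro Ck_on.simps(2)[THEN iffD2] exI[of _ "\<lambda>x. prod (F x) (G' x) + prod (F' x) (G x)"]) auto
qed simp

lemma Ck_on_mat2:
  assumes "Ck_on k S a" "Ck_on k S b" "Ck_on k S c" "Ck_on k S d"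
  shows "Ck_on k S (\<lambda>x. mat2 (a x) (b x) (c x) (d x))"
proof -
  have scaled: "Ck_on k S (\<lambda>x. e x *\<^sub>R M)" if "Ck_on k S e" for e and M :: "real^2^2"
    using Ck_on_bounded_bilinear[OF bounded_bilinear_scaleR that Ck_on_const] .
  show ?thesis
    by (subst mat2_decompose) (intro Ck_on_add scaled assms)
qed

lemma Ck_on_linear_ode_solution:
  fixes prod :: "'a::real_normed_vector \<Rightarrow> 'b::real_normed_vector \<Rightarrow> 'a"
  assumes "bounded_bilinear prod"
    and "\<And>u. u \<in> S \<Longrightarrow> (F has_vector_derivative prod (F u) (X u)) (at u)"
    and "\<And>k. Ck_on k S X"
  shows "Ck_on k S F"
proof (induction k)
  case (Suc k)
  have "Ck_on k S (\<lambda>u. prod (F u) (X u))"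
    using Ck_on_bounded_bilinear[OF assms(1) Suc.IH assms(3)] .
  with assms(2) show ?case
    by (intro Ck_on.simps(2)[THEN iffD2] exI[of _ "\<lambda>u. prod (F u) (X u)"]) auto
qed simp

lemma smooth_on_iff_Ck_on:
  assumes "open S"
  shows "smooth_on S F \<longleftrightarrow> (\<forall>k. Ck_on k S F)"
proof -
  define D where "D = (\<lambda>(G :: real \<Rightarrow> 'a) t. vector_derivative G (at t))"
  have "\<forall>k. Ck_on k S F" if "smooth_on S F"
  proof -
    have derivative: "\<forall>x\<in>S. ((D ^^ n) F has_vector_derivative (D ^^ Suc n) F x) (at x)" for n
      using that unfolding smooth_on_def D_def by (simp add: vector_derivative_works)
    have "Ck_on k S ((D ^^ n) F)" for k n
    proof (induction k arbitrary: n)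
      case (Suc k)
      from derivative[of n] Suc.IH[of "Suc n"] show ?case
        by (intro Ck_on.simps(2)[THEN iffD2] exI[of _ "(D ^^ Suc n) F"]) auto
    qed simp
    from this[of _ 0] show ?thesis
      by simp
  qed
  moreover have "smooth_on S F" if "\<forall>k. Ck_on k S F"
  proof -
    have "\<forall>k. Ck_on k S ((D ^^ n) F)" for n
      using that by (induction n) (auto simp: D_def Ck_on_vector_derivative[OF assms])
    then have "\<forall>x\<in>S. ((D ^^ n) F) differentiable (at x)" for n
      by (metis Ck_on.simps(2) differentiableI_vector)
    then show ?thesis
      unfolding smooth_on_def D_def by blast
  qed
  ultimately show ?thesis
    by blast
qed

lemma smooth_on_imp_continuous_on:
  assumes "open S" "smooth_on S F"
  shows "continuous_on S F"
proof -
  have "Ck_on (Suc 0) S F"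
    using assms smooth_on_iff_Ck_on by blast
  then obtain F' where "\<forall>x\<in>S. (F has_vector_derivative F' x) (at x)"
    by auto
  then show ?thesis
    by (meson continuous_at_imp_continuous_on has_vector_derivative_continuous)
qed

section \<open>Linear differential equations\<close>

lemma open_interval_cbox_neighbourhood:
  fixes I :: "real set"
  assumes "open I" "is_interval I" "x \<in> I" "y \<in> I"
  obtains a b where "{a..b} \<subseteq> I" "x \<in> {a<..<b}" "y \<in> {a<..<b}"
proof -
  have "min x y \<in> I" "max x y \<in> I"
    using assms(3,4) by (simp_all add: min_def max_def)
  then obtain d e where d: "d > 0" "ball (min x y) d \<subseteq> I" and e: "e > 0" "ball (max x y) e \<subseteq> I"
    using open_contains_ball_eq[OF assms(1)] by metis
  have "min x y - d/2 \<in> ball (min x y) d" "max x y + e/2 \<in> ball (max x y) e"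
    using d(1) e(1) by (simp_all add: dist_real_def)
  then have lo: "min x y - d/2 \<in> I" and hi: "max x y + e/2 \<in> I"
    using d(2) e(2) by blast+
  have "{min x y - d/2 .. max x y + e/2} \<subseteq> I"
  proof
    fix z assume "z \<in> {min x y - d/2 .. max x y + e/2}"
    then show "z \<in> I"
      using is_interval_1[THEN iffD1, OF assms(2), rule_format, OF lo hi, of z] by simp
  qed
  moreover have "x \<in> {min x y - d/2 <..< max x y + e/2}" "y \<in> {min x y - d/2 <..< max x y + e/2}"
    using d(1) e(1) by (simp_all add: min_def max_def)
  ultimately show ?thesis
    by (rule that)
qed

lemma antiderivative_on_open_interval:
  fixes h :: "real \<Rightarrow> 'a::banach"
  assumes "open I" "is_interval I" "u0 \<in> I" "continuous_on I h"
  obtains H where "H u0 = 0" "\<And>u. u \<in> I \<Longrightarrow> (H has_vector_derivative h u) (at u)"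
proof -
  define H where "H u = integral {u0..u} h - integral {u..u0} h" for u
  have "(H has_vector_derivative h u) (at u)" if u: "u \<in> I" for u
  proof -
    obtain a b where ab: "{a..b} \<subseteq> I" "u \<in> {a<..<b}" "u0 \<in> {a<..<b}"
      using open_interval_cbox_neighbourhood[OF assms(1,2) u assms(3)] .
    have cont: "continuous_on {a..b} h"
      using assms(4) ab(1) continuous_on_subset by blast
    have H_eq: "H x = integral {a..x} h - integral {a..u0} h" if "x \<in> {a<..<b}" for x
    proof (cases "u0 \<le> x")
      case True
      have combine: "integral {a..u0} h + integral {u0..x} h = integral {a..x} h"
        using True that ab by (intro Henstock_Kurzweil_Integration.integral_combine
            integrable_continuous_real continuous_on_subset[OF cont]) auto
      moreover have "integral {x..u0} h = 0"
        using True by (cases "x = u0") auto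
      ultimately show ?thesis
        unfolding H_def combine[symmetric] by simp
    next
      case False
      have combine: "integral {a..x} h + integral {x..u0} h = integral {a..u0} h"
        using False that ab by (intro Henstock_Kurzweil_Integration.integral_combine
            integrable_continuous_real continuous_on_subset[OF cont]) auto
      moreover have "integral {u0..x} h = 0"
        using False by simp
      ultimately show ?thesis
        unfolding H_def combine[symmetric] by simp
    qed
    have "u \<in> {a..b}"
      using ab(2) by simp
    then have "((\<lambda>x. integral {a..x} h) has_vector_derivative h u) (at u within {a..b})"
      by (rule integral_has_vector_derivative[OF cont])
    then have "((\<lambda>x. integral {a..x} h) has_vector_derivative h u) (at u within {a<..<b})"
      by (rule has_vector_derivative_within_subset) auto
    then have "((\<lambda>x. integral {a..x} h - integral {a..u0} h) has_vector_derivative h u) (at u)"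
      unfolding has_vector_derivative_diff_const at_within_open[OF ab(2) open_greaterThanLessThan] .
    then show ?thesis
      by (rule has_vector_derivative_transform_within_open[OF _ open_greaterThanLessThan ab(2)])
        (simp add: H_eq)
  qed
  moreover have "H u0 = 0"
    by (simp add: H_def)
  ultimately show ?thesis
    using that by blast
qed

lemma norm_le_power_if_derivative_bound:
  fixes H :: "real \<Rightarrow> 'a::real_normed_vector"
  assumes H: "\<And>s. s \<in> {a..b} \<Longrightarrow> (H has_vector_derivative H' s) (at s)"
    and bound: "\<And>s. s \<in> {a..b} \<Longrightarrow> norm (H' s) \<le> K * (real (Suc n) * \<bar>s - c\<bar> ^ n)"
    and "c \<in> {a..b}" "x \<in> {a..b}"
  shows "norm (H x - H c) \<le> K * \<bar>x - c\<bar> ^ Suc n"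
proof -
  have cont: "continuous_on {y..z} H" if "y \<in> {a..b}" "z \<in> {a..b}" for y z
    by (intro continuous_at_imp_continuous_on ballI has_vector_derivative_continuous[OF H])
      (use that in auto)
  consider "x < c" | "x = c" | "c < x"
    by linarith
  then show ?thesis
  proof cases
    case 1
    have "norm (H c - H x) \<le> - K * (c - c) ^ Suc n - - K * (c - x) ^ Suc n"
    proof (rule differentiable_bound_general[OF 1 cont[OF assms(4,3)]])
      fix s assume s: "x < s" "s < c"
      then have "s \<in> {a..b}"
        using assms(3,4) by auto
      then show "(H has_vector_derivative H' s) (at s)" "norm (H' s) \<le> K * (real (Suc n) * (c - s) ^ n)"
        using H bound[of s] s by auto
      show "((\<lambda>s. - K * (c - s) ^ Suc n) has_vector_derivative K * (real (Suc n) * (c - s) ^ n)) (at s)"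
        unfolding has_real_derivative_iff_has_vector_derivative[symmetric]
        by (rule derivative_eq_intros refl | simp)+
    qed (intro continuous_intros)
    with 1 show ?thesis
      by (simp add: norm_minus_commute)
  next
    case 3
    have "norm (H x - H c) \<le> K * (x - c) ^ Suc n - K * (c - c) ^ Suc n"
    proof (rule differentiable_bound_general[OF 3 cont[OF assms(3,4)]])
      fix s assume s: "c < s" "s < x"
      then have "s \<in> {a..b}"
        using assms(3,4) by auto
      then show "(H has_vector_derivative H' s) (at s)" "norm (H' s) \<le> K * (real (Suc n) * (s - c) ^ n)"
        using H bound[of s] s by auto
      show "((\<lambda>s. K * (s - c) ^ Suc n) has_vector_derivative K * (real (Suc n) * (s - c) ^ n)) (at s)"
        unfolding has_real_derivative_iff_has_vector_derivative[symmetric]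
        by (rule derivative_eq_intros refl | simp)+
    qed (intro continuous_intros)
    with 3 show ?thesis
      by simp
  qed simp
qed

lemma has_vector_derivative_series:
  fixes f :: "nat \<Rightarrow> real \<Rightarrow> 'a::banach"
  assumes "convex S"
    and "\<And>n x. x \<in> S \<Longrightarrow> (f n has_vector_derivative f' n x) (at x within S)"
    and "uniform_limit S (\<lambda>n x. \<Sum>i<n. f' i x) g' sequentially"
    and "x0 \<in> S" "summable (\<lambda>n. f n x0)"
  shows "\<exists>g. \<forall>x\<in>S. (\<lambda>n. f n x) sums g x \<and> (g has_vector_derivative g' x) (at x within S)"
  unfolding has_vector_derivative_def
proof (rule has_derivative_series[OF assms(1) _ _ assms(4)])
  show "\<forall>\<^sub>F n in sequentially. \<forall>x\<in>S. \<forall>h.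
      norm ((\<Sum>i<n. h *\<^sub>R f' i x) - h *\<^sub>R g' x) \<le> e * norm h" if "e > 0" for e
  proof -
    have "\<forall>\<^sub>F n in sequentially. \<forall>x\<in>S. dist (\<Sum>i<n. f' i x) (g' x) < e"
      using assms(3) \<open>e > 0\<close> by (simp add: uniform_limit_iff)
    then show ?thesis
    proof eventually_elim
      case (elim n)
      have "norm ((\<Sum>i<n. h *\<^sub>R f' i x) - h *\<^sub>R g' x) \<le> e * norm h" if "x \<in> S" for x h
      proof -
        have "norm ((\<Sum>i<n. h *\<^sub>R f' i x) - h *\<^sub>R g' x) = \<bar>h\<bar> * dist (\<Sum>i<n. f' i x) (g' x)"
          by (simp add: dist_norm scaleR_sum_right[symmetric] scaleR_diff_right[symmetric])
        also have "\<dots> \<le> \<bar>h\<bar> * e"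
          using elim that by (intro mult_left_mono) (auto simp: less_imp_le)
        finally show ?thesis
          by (simp add: mult.commute)
      qed
      then show ?case
        by blast
    qed
  qed
qed (use assms(2,5) in \<open>auto simp: has_vector_derivative_def summable_sums\<close>)

context
  fixes prod :: "'a::banach \<Rightarrow> 'b::real_normed_vector \<Rightarrow> 'a"
    and I :: "real set" and u0 :: real and X :: "real \<Rightarrow> 'b"
  assumes prod: "bounded_bilinear prod"
    and I: "open I" "is_interval I" "u0 \<in> I"
    and X: "continuous_on I X"
begin

text \<open>The terms of the Picard series: their sum solves F' = prod F X with F u0 = F0.\<close>

primrec picard_term :: "'a \<Rightarrow> nat \<Rightarrow> real \<Rightarrow> 'a" where
  "picard_term F0 0 = (\<lambda>u. F0)"
| "picard_term F0 (Suc n) = (SOME H. H u0 = 0 \<and>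
     (\<forall>u\<in>I. (H has_vector_derivative prod (picard_term F0 n u) (X u)) (at u)))"

declare picard_term.simps(2) [simp del]

lemma picard_term_Suc_if_continuous:
  assumes "continuous_on I (picard_term F0 n)"
  shows "picard_term F0 (Suc n) u0 = 0 \<and>
    (\<forall>u\<in>I. (picard_term F0 (Suc n) has_vector_derivative prod (picard_term F0 n u) (X u)) (at u))"
proof -
  have "continuous_on I (\<lambda>u. prod (picard_term F0 n u) (X u))"
    using bounded_bilinear.continuous_on[OF prod assms X] .
  from antiderivative_on_open_interval[OF I this] obtain H where "H u0 = 0"
    "\<And>u. u \<in> I \<Longrightarrow> (H has_vector_derivative prod (picard_term F0 n u) (X u)) (at u)"
    by blast
  then have "\<exists>H. H u0 = 0 \<and> (\<forall>u\<in>I. (H has_vector_derivative prod (picard_term F0 n u) (X u)) (at u))"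
    by (intro exI[of _ H]) simp
  from someI_ex[OF this] show ?thesis
    unfolding picard_term.simps(2) .
qed

lemma picard_term_continuous: "continuous_on I (picard_term F0 n)"
proof (induction n)
  case (Suc n)
  then show ?case
    using picard_term_Suc_if_continuous
    by (meson continuous_at_imp_continuous_on has_vector_derivative_continuous)
qed simp

lemmas picard_term_Suc = picard_term_Suc_if_continuous[OF picard_term_continuous]

lemma picard_term_bound:
  assumes ab: "{a..b} \<subseteq> I" "u0 \<in> {a..b}"
    and C: "C \<ge> 0" "\<And>s M. s \<in> {a..b} \<Longrightarrow> norm (prod M (X s)) \<le> C * norm M"
  shows "x \<in> {a..b} \<Longrightarrow> norm (picard_term F0 n x) \<le> norm F0 * (C * \<bar>x - u0\<bar>) ^ n / fact n"
proof (induction n arbitrary: x)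
  case (Suc n)
  define K where "K = norm F0 * C ^ Suc n / fact (Suc n)"
  have "norm (prod (picard_term F0 n s) (X s)) \<le> K * (real (Suc n) * \<bar>s - u0\<bar> ^ n)"
    if "s \<in> {a..b}" for s
  proof -
    have "norm (prod (picard_term F0 n s) (X s)) \<le> C * (norm F0 * (C * \<bar>s - u0\<bar>) ^ n / fact n)"
      using C Suc.IH[OF that] that by (meson mult_left_mono order.trans)
    also have "\<dots> = K * (real (Suc n) * \<bar>s - u0\<bar> ^ n)"
      by (simp add: K_def power_mult_distrib field_simps del: of_nat_Suc)
    finally show ?thesis .
  qed
  then have "norm (picard_term F0 (Suc n) x - picard_term F0 (Suc n) u0) \<le> K * \<bar>x - u0\<bar> ^ Suc n"
    using picard_term_Suc ab Suc.prems
    by (intro norm_le_power_if_derivative_bound[where H' = "\<lambda>s. prod (picard_term F0 n s) (X s)"]) auto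
  then show ?case
    using picard_term_Suc by (simp add: K_def power_mult_distrib mult_ac)
qed simp

lemma picard_term_summable_bound:
  assumes ab: "{a..b} \<subseteq> I" "u0 \<in> {a..b}"
  obtains M where "summable M" "\<And>n x. x \<in> {a..b} \<Longrightarrow> norm (picard_term F0 n x) \<le> M n"
proof -
  have "bounded (X ` {a..b})"
    using ab(1) by (intro compact_imp_bounded compact_continuous_image continuous_on_subset[OF X]) auto
  then obtain B where B: "\<forall>s\<in>{a..b}. norm (X s) \<le> B"
    by (auto simp: bounded_iff)
  obtain K where K: "K > 0" "\<And>M x. norm (prod M x) \<le> norm M * norm x * K"
    using bounded_bilinear.pos_bounded[OF prod] by blast
  define C where "C = max 0 B * K"
  have C0: "C \<ge> 0"
    using K(1) by (simp add: C_def)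
  have CX: "norm (prod M (X s)) \<le> C * norm M" if "s \<in> {a..b}" for s M
  proof -
    have "norm M * norm (X s) * K \<le> norm M * max 0 B * K"
      using bspec[OF B that] K(1) by (intro mult_right_mono mult_left_mono) auto
    then show ?thesis
      using K(2)[of M "X s"] by (simp add: C_def mult_ac)
  qed
  define M where "M n = norm F0 * (C * (b - a)) ^ n / fact n" for n
  have "M = (\<lambda>n. norm F0 * (inverse (fact n) * (C * (b - a)) ^ n))"
    by (simp add: fun_eq_iff M_def divide_inverse mult_ac)
  then have "summable M"
    by (simp only:) (intro summable_mult summable_exp)
  moreover have "norm (picard_term F0 n x) \<le> M n" if "x \<in> {a..b}" for n x
  proof -
    have "\<bar>x - u0\<bar> \<le> b - a"
      using that ab(2) by auto
    then have "norm F0 * (C * \<bar>x - u0\<bar>) ^ n / fact n \<le> M n"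
      unfolding M_def using C0
      by (intro divide_right_mono mult_left_mono power_mono mult_left_mono) auto
    moreover have "norm (picard_term F0 n x) \<le> norm F0 * (C * \<bar>x - u0\<bar>) ^ n / fact n"
      by (rule picard_term_bound[OF ab C0 CX that])
    ultimately show ?thesis
      by linarith
  qed
  ultimately show ?thesis
    by (rule that)
qed

lemma picard_series_has_derivative:
  assumes "u \<in> I"
  shows "((\<lambda>x. \<Sum>n. picard_term F0 n x) has_vector_derivative
           prod (\<Sum>n. picard_term F0 n u) (X u)) (at u)"
proof -
  let ?T = "picard_term F0" and ?F = "\<lambda>x. \<Sum>n. picard_term F0 n x"
  obtain a b where ab: "{a..b} \<subseteq> I" "u \<in> {a<..<b}" "u0 \<in> {a<..<b}"
    using open_interval_cbox_neighbourhood[OF I(1,2) assms I(3)] .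
  define S where "S = {a<..<b}"
  have uS: "u \<in> S" and open_S: "open S" and convex_S: "convex S" and S_sub: "S \<subseteq> {a..b}"
    using ab(2) by (auto simp: S_def)
  obtain M where M: "summable M" "\<And>n x. x \<in> {a..b} \<Longrightarrow> norm (?T n x) \<le> M n"
    using picard_term_summable_bound[OF ab(1)] ab(3) by auto
  then have sums: "uniform_limit S (\<lambda>n x. \<Sum>i<n. ?T i x) ?F sequentially"
    using S_sub by (intro Weierstrass_m_test) auto
  have "bounded (?F ` S)"
    unfolding bounded_iff
  proof (intro exI ballI)
    fix y assume "y \<in> ?F ` S"
    then obtain x where "x \<in> {a..b}" "y = ?F x"
      using S_sub by blast
    then show "norm y \<le> suminf M"
      using norm_suminf_le[OF M(2)[OF \<open>x \<in> {a..b}\<close>] M(1)] by simp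
  qed
  moreover have "bounded (X ` S)"
    using ab(1) S_sub by (intro compact_imp_bounded compact_continuous_image bounded_subset[of "X ` {a..b}"]
        continuous_on_subset[OF X]) auto
  ultimately have "uniform_limit S (\<lambda>n x. prod (\<Sum>i<n. ?T i x) (X x)) (\<lambda>x. prod (?F x) (X x)) sequentially"
    by (intro bounded_bilinear.bounded_uniform_limit[OF prod sums uniform_limit_const])
  then have derivatives:
    "uniform_limit S (\<lambda>n x. \<Sum>i<n. prod (?T i x) (X x)) (\<lambda>x. prod (?F x) (X x)) sequentially"
    by (simp add: bounded_bilinear.sum_left[OF prod])
  have "(?T (Suc n) has_vector_derivative prod (?T n x) (X x)) (at x within S)" if "x \<in> S" for n x
  proof -
    have "x \<in> I"
      using that S_sub ab(1) by blast
    then show ?thesis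
      using picard_term_Suc[of F0 n] by (blast intro: has_vector_derivative_at_within)
  qed
  moreover have "summable (\<lambda>n. ?T (Suc n) u)"
  proof -
    have "u \<in> {a..b}"
      using uS S_sub by blast
    then have "summable (\<lambda>n. ?T n u)"
      using M(2) by (intro summable_comparison_test'[OF M(1)])
    then show ?thesis
      by (subst summable_Suc_iff)
  qed
  ultimately have "\<exists>g. \<forall>x\<in>S. (\<lambda>n. ?T (Suc n) x) sums g x \<and>
      (g has_vector_derivative prod (?F x) (X x)) (at x within S)"
    by (rule has_vector_derivative_series[OF convex_S _ derivatives uS])
  then obtain g where g: "\<And>x. x \<in> S \<Longrightarrow> (\<lambda>n. ?T (Suc n) x) sums g x"
      "\<And>x. x \<in> S \<Longrightarrow> (g has_vector_derivative prod (?F x) (X x)) (at x within S)"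
    by blast
  have F_eq: "?F x = g x + F0" if "x \<in> S" for x
  proof -
    have "(\<lambda>n. ?T n x) sums (g x + F0)"
      using sums_Suc_iff[THEN iffD1, OF g(1)[OF that]] by simp
    then show ?thesis
      by (rule sums_unique[symmetric])
  qed
  have "((\<lambda>x. g x + F0) has_vector_derivative prod (?F u) (X u)) (at u)"
    using g(2)[OF uS] unfolding has_vector_derivative_add_const at_within_open[OF uS open_S] .
  then show ?thesis
    by (rule has_vector_derivative_transform_within_open[OF _ open_S uS]) (simp add: F_eq)
qed

lemma linear_ode_solution_exists:
  obtains F where "F u0 = F0" "\<And>u. u \<in> I \<Longrightarrow> (F has_vector_derivative prod (F u) (X u)) (at u)"
proof -
  define F where "F x = (\<Sum>n. picard_term F0 n x)" for x
  have "(\<lambda>n. picard_term F0 n u0) = (\<lambda>n. if n = 0 then F0 else 0)"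
    using picard_term_Suc by (auto simp: fun_eq_iff gr0_conv_Suc)
  then have "F u0 = F0"
    using sums_single[of 0 "\<lambda>_. F0"] sums_unique by (fastforce simp: F_def)
  moreover have "(F has_vector_derivative prod (F u) (X u)) (at u)" if "u \<in> I" for u
    unfolding F_def using picard_series_has_derivative[OF that] .
  ultimately show ?thesis
    using that by blast
qed

end

section \<open>The frames\<close>

definition weierstrass_matrix :: "real \<Rightarrow> real^2^2" where
  "weierstrass_matrix q = mat2 q (- (q^2)) 1 (- q)"

text \<open>The unit normal of the surface at the identity frame: the matrix orthogonal to
  mat 1, weierstrass_matrix q and transpose (weierstrass_matrix r), normalised.\<close>

definition normal_matrix :: "real \<Rightarrow> real \<Rightarrow> real^2^2" where
  "normal_matrix q r = (1 / (1 + q * r)) *\<^sub>R mat2 (q * r - 1) (2 * q) (2 * r) (1 - q * r)"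

lemma transpose_weierstrass_matrix: "transpose (weierstrass_matrix r) = mat2 r 1 (- (r^2)) (- r)"
  by (simp add: weierstrass_matrix_def matrix_2x2_eq_iff)

lemma inner42_weierstrass_matrix_self: "inner42 (weierstrass_matrix q) (weierstrass_matrix q) = 0"
  by (simp add: inner42_2x2 weierstrass_matrix_def power2_eq_square)

lemma inner42_weierstrass_matrix_transpose:
  "2 * inner42 (weierstrass_matrix q) (transpose (weierstrass_matrix r)) = (1 + q * r)^2"
  by (simp add: inner42_2x2 weierstrass_matrix_def power2_eq_square algebra_simps)

lemma inner42_normal_matrix:
  assumes "1 + q * r \<noteq> 0"
  shows "inner42 (normal_matrix q r) (normal_matrix q r) = 1"
    and "inner42 (normal_matrix q r) (mat 1) = 0"
    and "inner42 (normal_matrix q r) (weierstrass_matrix q) = 0"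
    and "inner42 (normal_matrix q r) (transpose (weierstrass_matrix r)) = 0"
    and "2 * inner42 (weierstrass_matrix q ** transpose (weierstrass_matrix r)) (normal_matrix q r) = (1 + q * r)^2"
proof -
  define d where "d = 1 + q * r"
  define M where "M = mat2 (q * r - 1) (2 * q) (2 * r) (1 - q * r)"
  have "normal_matrix q r = (1 / d) *\<^sub>R M"
    by (simp add: normal_matrix_def d_def M_def)
  moreover have "inner42 M M = d^2" "inner42 M (mat 1) = 0" "inner42 M (weierstrass_matrix q) = 0"
    "inner42 M (transpose (weierstrass_matrix r)) = 0" "2 * inner42 (weierstrass_matrix q ** transpose (weierstrass_matrix r)) M = d^3"
    by (simp_all add: M_def d_def inner42_2x2 weierstrass_matrix_def power2_eq_square power3_eq_cube algebra_simps)
  ultimately show "inner42 (normal_matrix q r) (normal_matrix q r) = 1"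
    and "inner42 (normal_matrix q r) (mat 1) = 0"
    and "inner42 (normal_matrix q r) (weierstrass_matrix q) = 0"
    and "inner42 (normal_matrix q r) (transpose (weierstrass_matrix r)) = 0"
    and "2 * inner42 (weierstrass_matrix q ** transpose (weierstrass_matrix r)) (normal_matrix q r) = (1 + q * r)^2"
    using assms unfolding d_def[symmetric] by (simp_all add: field_simps power2_eq_square power3_eq_cube)
qed

lemma sol_left_imp_derivative:
  assumes "sol_left I q f F" "u \<in> I"
  shows "det (F u) = 1 \<and> (F has_vector_derivative F u ** (f u *\<^sub>R weierstrass_matrix (q u))) (at u)"
proof -
  obtain D where D: "det (F u) = 1" "(F has_vector_derivative D) (at u)"
    "matrix_inv (F u) ** D = f u *\<^sub>R weierstrass_matrix (q u)"
    using assms unfolding sol_left_def weierstrass_matrix_def by blast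
  have "D = F u ** (matrix_inv (F u) ** D)"
    using adj2_inverse_SL2(1)[OF D(1)] by (simp add: matrix_inv_SL2[OF D(1)] matrix_mul_assoc)
  with D show ?thesis
    by simp
qed

lemma sol_left_imp_transpose_derivative:
  assumes "sol_left J r g F" "v \<in> J"
  shows "det (transpose (F v)) = 1 \<and>
    ((\<lambda>t. transpose (F t)) has_vector_derivative
      (g v *\<^sub>R transpose (weierstrass_matrix (r v))) ** transpose (F v)) (at v)"
  using sol_left_imp_derivative[OF assms] bounded_linear.has_vector_derivative[OF bounded_linear_transpose]
  by (fastforce simp: det_transpose matrix_transpose_mul transpose_scalar)

lemma sol_right_imp_inverse_derivative:
  assumes "sol_right J r g F" "v \<in> J"
  shows "det (matrix_inv (F v)) = 1 \<and>
    ((\<lambda>t. matrix_inv (F t)) has_vector_derivative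
      (g v *\<^sub>R transpose (weierstrass_matrix (r v))) ** matrix_inv (F v)) (at v)"
proof -
  obtain D where D: "det (F v) = 1" "((\<lambda>t. matrix_inv (F t)) has_vector_derivative D) (at v)"
    "D ** F v = g v *\<^sub>R transpose (weierstrass_matrix (r v))"
    using assms unfolding sol_right_def transpose_weierstrass_matrix by blast
  have "D = (D ** F v) ** matrix_inv (F v)"
    using adj2_inverse_SL2(1)[OF D(1)] by (simp add: matrix_inv_SL2[OF D(1)] matrix_mul_assoc[symmetric])
  with D show ?thesis
    by (simp add: matrix_inv_SL2)
qed

lemma sol_left_exists:
  assumes "open I" "is_interval I" "smooth_on I q" "smooth_on I f"
  obtains F where "sol_left I q f F"
proof (cases "I = {}")
  case True
  then show ?thesis
    using that by (simp add: sol_left_def smooth_on_def)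
next
  case False
  then obtain u0 where u0: "u0 \<in> I"
    by blast
  define X where "X u = f u *\<^sub>R weierstrass_matrix (q u)" for u
  have "Ck_on k I q" "Ck_on k I f" for k
    using assms smooth_on_iff_Ck_on by blast+
  then have X_smooth: "Ck_on k I X" for k
    unfolding X_def weierstrass_matrix_def power2_eq_square
    by (intro Ck_on_bounded_bilinear[OF bounded_bilinear_scaleR] Ck_on_mat2 Ck_on_const
        Ck_on_bounded_linear[OF bounded_linear_minus[OF bounded_linear_ident]]
        Ck_on_bounded_bilinear[OF bounded_bilinear_mult])
  then have "continuous_on I X"
    using assms(1) smooth_on_iff_Ck_on smooth_on_imp_continuous_on by blast
  then obtain F where F: "F u0 = mat 1" "\<And>u. u \<in> I \<Longrightarrow> (F has_vector_derivative F u ** X u) (at u)"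
    using linear_ode_solution_exists[OF bounded_bilinear_matrix_mult assms(1,2) u0] by blast
  have "trace (X u) = 0" for u
    by (simp add: X_def trace_2 weierstrass_matrix_def)
  then have det: "det (F u) = 1" if "u \<in> I" for u
    using det_constant_if_traceless[OF assms(2) u0 that F(2)] F(1) by simp
  have "smooth_on I F"
    using Ck_on_linear_ode_solution[OF bounded_bilinear_matrix_mult F(2) X_smooth]
      smooth_on_iff_Ck_on[OF assms(1)] by blast
  moreover have "matrix_inv (F u) ** (F u ** X u) = X u" if "u \<in> I" for u
    using adj2_inverse_SL2(2)[OF det[OF that]] by (simp add: matrix_inv_SL2 det that matrix_mul_assoc)
  ultimately have "sol_left I q f F"
    unfolding sol_left_def using det F(2) by (auto simp: X_def weierstrass_matrix_def)
  then show ?thesis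
    by (rule that)
qed

text \<open>Since the inverse of an SL_2 matrix is its adjugate, F = adj2 (transpose H) has
  F^-1 = transpose H, whose equation is the transposed equation of H.\<close>

lemma sol_right_exists:
  assumes "open J" "is_interval J" "smooth_on J r" "smooth_on J g"
  obtains F where "sol_right J r g F"
proof -
  obtain H where H: "sol_left J r g H"
    using sol_left_exists[OF assms] .
  define F where "F t = adj2 (transpose (H t))" for t
  have "Ck_on k J F" for k
    using H assms(1) smooth_on_iff_Ck_on unfolding sol_left_def F_def
    by (metis Ck_on_bounded_linear bounded_linear_adj2 bounded_linear_transpose)
  then have "smooth_on J F"
    using assms(1) smooth_on_iff_Ck_on by blast
  moreover have "det (F v) = 1 \<and> (\<exists>D. ((\<lambda>t. matrix_inv (F t)) has_vector_derivative D) (at v) \<and>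
      D ** F v = g v *\<^sub>R mat2 (r v) 1 (- (r v)\<^sup>2) (- r v))" if v: "v \<in> J" for v
  proof -
    have inverse: "matrix_inv (F t) = transpose (H t)" if "t \<in> J" for t
      using sol_left_imp_transpose_derivative[OF H that] by (simp add: F_def matrix_inv_SL2)
    note H' = sol_left_imp_transpose_derivative[OF H v]
    have "((\<lambda>t. matrix_inv (F t)) has_vector_derivative
        (g v *\<^sub>R transpose (weierstrass_matrix (r v))) ** transpose (H v)) (at v)"
      using H'[THEN conjunct2] by (rule has_vector_derivative_transform_within_open[OF _ assms(1) v])
        (simp add: inverse)
    moreover have "(g v *\<^sub>R transpose (weierstrass_matrix (r v))) ** transpose (H v) ** F v =
        g v *\<^sub>R transpose (weierstrass_matrix (r v))"
      using adj2_inverse_SL2(1)[of "transpose (H v)"] H' by (simp add: F_def matrix_mul_assoc[symmetric])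
    ultimately show ?thesis
      using H' by (auto simp: F_def transpose_weierstrass_matrix)
  qed
  ultimately have "sol_right J r g F"
    unfolding sol_right_def by blast
  then show ?thesis
    by (rule that)
qed

section \<open>The surface\<close>

lemma frame_product_partials:
  fixes L R :: "real \<Rightarrow> real^2^2"
  assumes L: "(L has_vector_derivative L u ** A) (at u)"
    and R: "(R has_vector_derivative B ** R v) (at v)"
  defines "P \<equiv> \<lambda>(u, v). L u ** R v"
  shows "P differentiable (at (u, v))"
    and "pu P (u, t) = L u ** A ** R t"
    and "pv P (u, v) = L u ** B ** R v"
    and "((\<lambda>t. pu P (u, t)) has_vector_derivative L u ** (A ** B) ** R v) (at v)"
    and "pv (pu P) (u, v) = L u ** (A ** B) ** R v"
proof -
  note left = bounded_bilinear.bounded_linear_left[OF bounded_bilinear_matrix_mult]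
  note right = bounded_bilinear.bounded_linear_right[OF bounded_bilinear_matrix_mult]
  have "L differentiable (at (fst (u, v)))"
    using L by (auto intro: differentiableI_vector)
  then have "(\<lambda>p. L (fst p)) differentiable (at (u, v))"
    by (rule differentiable_compose) (simp add: bounded_linear_imp_differentiable bounded_linear_fst)
  moreover have "R differentiable (at (snd (u, v)))"
    using R by (auto intro: differentiableI_vector)
  then have "(\<lambda>p. R (snd p)) differentiable (at (u, v))"
    by (rule differentiable_compose) (simp add: bounded_linear_imp_differentiable bounded_linear_snd)
  ultimately show "P differentiable (at (u, v))"
    unfolding P_def split_beta' differentiable_def
    using bounded_bilinear.FDERIV[OF bounded_bilinear_matrix_mult] by blast
  show pu: "pu P (u, t) = L u ** A ** R t" for t
    using vector_derivative_at[OF bounded_linear.has_vector_derivative[OF left L, of "R t"]]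
    by (simp add: pu_def P_def)
  show "pv P (u, v) = L u ** B ** R v"
    using vector_derivative_at[OF bounded_linear.has_vector_derivative[OF right R, of "L u"]]
    by (simp add: pv_def P_def matrix_mul_assoc)
  show "((\<lambda>t. pu P (u, t)) has_vector_derivative L u ** (A ** B) ** R v) (at v)"
    using bounded_linear.has_vector_derivative[OF right R, of "L u ** A"]
    by (simp add: pu matrix_mul_assoc)
  then show "pv (pu P) (u, v) = L u ** (A ** B) ** R v"
    by (simp add: pv_def vector_derivative_at)
qed

definition frame_normal ::
  "(real \<Rightarrow> real^2^2) \<Rightarrow> (real \<Rightarrow> real^2^2) \<Rightarrow> (real \<Rightarrow> real) \<Rightarrow> (real \<Rightarrow> real) \<Rightarrow>
    real \<times> real \<Rightarrow> real^2^2" where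
  "frame_normal L R q r = (\<lambda>(u, v). L u ** normal_matrix (q u) (r v) ** R v)"

lemma continuous_on_frame_normal:
  assumes "continuous_on I L" "continuous_on J R" "continuous_on I q" "continuous_on J r"
    and "\<And>u v. u \<in> I \<Longrightarrow> v \<in> J \<Longrightarrow> 1 + q u * r v \<noteq> 0"
  shows "continuous_on (I \<times> J) (frame_normal L R q r)"
proof -
  have fst: "continuous_on (I \<times> J) (\<lambda>p. h (fst p))"
    if "continuous_on I h" for h :: "real \<Rightarrow> 'a::topological_space"
    by (rule continuous_on_compose2[OF that continuous_on_fst[OF continuous_on_id]]) auto
  have snd: "continuous_on (I \<times> J) (\<lambda>p. h (snd p))"
    if "continuous_on J h" for h :: "real \<Rightarrow> 'a::topological_space"
    by (rule continuous_on_compose2[OF that continuous_on_snd[OF continuous_on_id]]) auto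
  have "continuous_on (I \<times> J) (\<lambda>p. normal_matrix (q (fst p)) (r (snd p)))"
    unfolding normal_matrix_def using assms(5)
    by (intro continuous_intros fst snd assms(3,4)) auto
  then show ?thesis
    unfolding frame_normal_def split_beta'
    by (intro bounded_bilinear.continuous_on[OF bounded_bilinear_matrix_mult] fst snd assms(1,2))
qed

lemma frame_product_at:
  fixes L R :: "real \<Rightarrow> real^2^2" and q f r g :: "real \<Rightarrow> real"
  assumes L: "\<And>u. u \<in> I \<Longrightarrow>
      det (L u) = 1 \<and> (L has_vector_derivative L u ** (f u *\<^sub>R weierstrass_matrix (q u))) (at u)"
    and R: "\<And>v. v \<in> J \<Longrightarrow>
      det (R v) = 1 \<and> (R has_vector_derivative (g v *\<^sub>R transpose (weierstrass_matrix (r v))) ** R v) (at v)"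
    and nondegenerate: "\<forall>u\<in>I. \<forall>v\<in>J. f u * g v * (1 + q u * r v)^2 \<noteq> 0"
    and "p \<in> I \<times> J"
  defines "P \<equiv> \<lambda>(u, v). L u ** R v" and "N \<equiv> frame_normal L R q r"
  shows "P differentiable (at p) \<and> det (P p) = 1
      \<and> (\<lambda>t. pu P (fst p, t)) differentiable (at (snd p))
      \<and> inner42 (pu P p) (pu P p) = 0 \<and> inner42 (pv P p) (pv P p) = 0
      \<and> inner42 (pu P p) (pv P p) \<noteq> 0
      \<and> inner42 (N p) (N p) = 1 \<and> inner42 (N p) (P p) = 0
      \<and> inner42 (N p) (pu P p) = 0 \<and> inner42 (N p) (pv P p) = 0
      \<and> meancurv P N p = 1
      \<and> 2 * inner42 (pu P p) (pv P p) = 1 * ((1 + q (fst p) * r (snd p))^2 * f (fst p) * g (snd p))"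
proof -
  obtain u v where p: "p = (u, v)" "u \<in> I" "v \<in> J"
    using \<open>p \<in> I \<times> J\<close> by blast
  define A where "A = f u *\<^sub>R weierstrass_matrix (q u)"
  define B where "B = g v *\<^sub>R transpose (weierstrass_matrix (r v))"
  define n where "n = normal_matrix (q u) (r v)"
  have Lu: "det (L u) = 1" "(L has_vector_derivative L u ** A) (at u)"
    using L[OF p(2)] by (simp_all add: A_def)
  have Rv: "det (R v) = 1" "(R has_vector_derivative B ** R v) (at v)"
    using R[OF p(3)] by (simp_all add: B_def)
  note partials = frame_product_partials[OF Lu(2) Rv(2), folded P_def]
  have invariant: "inner42 (L u ** X ** R v) (L u ** Y ** R v) = inner42 X Y" for X Y
    by (rule inner42_mult_SL2[OF Lu(1) Rv(1)])
  have "f u * g v * (1 + q u * r v)^2 \<noteq> 0"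
    using nondegenerate p by blast
  then have qr: "1 + q u * r v \<noteq> 0" and metric: "(1 + q u * r v)^2 * f u * g v \<noteq> 0"
    by (simp_all add: mult_ac)
  note normal = inner42_normal_matrix[OF qr, folded n_def]
  have AA: "inner42 A A = 0" and BB: "inner42 B B = 0"
    by (simp_all add: A_def B_def inner42_weierstrass_matrix_self)
  have AB: "2 * inner42 A B = (1 + q u * r v)^2 * f u * g v"
    using inner42_weierstrass_matrix_transpose[of "q u" "r v"] by (simp add: A_def B_def)
  have "A ** B = (f u * g v) *\<^sub>R (weierstrass_matrix (q u) ** transpose (weierstrass_matrix (r v)))"
    by (simp add: A_def B_def matrix_2x2_eq_iff algebra_simps)
  then have ABn: "2 * inner42 (A ** B) n = (1 + q u * r v)^2 * f u * g v"
    using normal(5) by simp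
  have nA: "inner42 n A = 0" and nB: "inner42 n B = 0"
    using normal(3,4) by (simp_all add: A_def B_def)
  have P_uv: "P (u, v) = L u ** mat 1 ** R v" and N_uv: "N (u, v) = L u ** n ** R v"
    by (simp_all add: P_def N_def frame_normal_def n_def)
  have "(\<lambda>t. pu P (u, t)) differentiable (at v)"
    using partials(4) by (rule differentiableI_vector)
  with partials(1) Lu(1) Rv(1) metric AA BB AB ABn nA nB normal(1,2) show ?thesis
    unfolding p(1) fst_conv snd_conv partials(2,3,5) P_uv N_uv invariant meancurv_def
    by (auto simp: det_mul)
qed

lemma frame_product_cmc:
  fixes L R :: "real \<Rightarrow> real^2^2" and q f r g :: "real \<Rightarrow> real"
  assumes L: "\<And>u. u \<in> I \<Longrightarrow>
      det (L u) = 1 \<and> (L has_vector_derivative L u ** (f u *\<^sub>R weierstrass_matrix (q u))) (at u)"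
    and R: "\<And>v. v \<in> J \<Longrightarrow>
      det (R v) = 1 \<and> (R has_vector_derivative (g v *\<^sub>R transpose (weierstrass_matrix (r v))) ** R v) (at v)"
    and "continuous_on I q" "continuous_on J r"
    and nondegenerate: "\<forall>u\<in>I. \<forall>v\<in>J. f u * g v * (1 + q u * r v)^2 \<noteq> 0"
  defines "P \<equiv> \<lambda>(u, v). L u ** R v"
  shows "cmc_conformal_timelike (I \<times> J) P \<and> metric_conformal_to (I \<times> J) P q f r g"
proof -
  have "continuous_on I L" "continuous_on J R"
    using L R by (intro continuous_at_imp_continuous_on ballI has_vector_derivative_continuous; blast)+
  then have "continuous_on (I \<times> J) (frame_normal L R q r)"
    using assms(3,4) nondegenerate by (intro continuous_on_frame_normal) auto
  with frame_product_at[OF L R nondegenerate, folded P_def] show ?thesis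
    unfolding cmc_conformal_timelike_def metric_conformal_to_def
    by (intro conjI exI[of _ "frame_normal L R q r"] exI[of _ "\<lambda>p. 1"]) auto
qed

theorem mainTheorem8:
  fixes I J :: "real set" and q f r g :: "real \<Rightarrow> real"
  assumes "open I" "is_interval I" "open J" "is_interval J"
    and "smooth_on I q" "smooth_on I f" "smooth_on J r" "smooth_on J g"
    and "\<forall>u\<in>I. \<forall>v\<in>J. f u * g v * (1 + q u * r v)^2 \<noteq> 0"
  shows "((\<exists>F1 F2. sol_left I q f F1 \<and> sol_left J r g F2) \<and>
          (\<forall>F1 F2. sol_left I q f F1 \<and> sol_left J r g F2 \<longrightarrow>
             cmc_conformal_timelike (I \<times> J) (\<lambda>(u, v). F1 u ** transpose (F2 v)) \<and>
             metric_conformal_to (I \<times> J) (\<lambda>(u, v). F1 u ** transpose (F2 v)) q f r g))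
       \<and> ((\<exists>F1 F2. sol_left I q f F1 \<and> sol_right J r g F2) \<and>
          (\<forall>F1 F2. sol_left I q f F1 \<and> sol_right J r g F2 \<longrightarrow>
             cmc_conformal_timelike (I \<times> J) (\<lambda>(u, v). F1 u ** matrix_inv (F2 v)) \<and>
             metric_conformal_to (I \<times> J) (\<lambda>(u, v). F1 u ** matrix_inv (F2 v)) q f r g))"
proof -
  have q: "continuous_on I q" and r: "continuous_on J r"
    using assms smooth_on_imp_continuous_on by blast+
  obtain F1 where "sol_left I q f F1"
    using sol_left_exists[OF assms(1,2,5,6)] .
  moreover obtain F2 where "sol_left J r g F2"
    using sol_left_exists[OF assms(3,4,7,8)] .
  moreover obtain G2 where "sol_right J r g G2"
    using sol_right_exists[OF assms(3,4,7,8)] .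
  moreover have "cmc_conformal_timelike (I \<times> J) (\<lambda>(u, v). F1 u ** transpose (F2 v)) \<and>
      metric_conformal_to (I \<times> J) (\<lambda>(u, v). F1 u ** transpose (F2 v)) q f r g"
    if "sol_left I q f F1" "sol_left J r g F2" for F1 F2
    using frame_product_cmc[OF sol_left_imp_derivative[OF that(1)]
        sol_left_imp_transpose_derivative[OF that(2)] q r assms(9)] .
  moreover have "cmc_conformal_timelike (I \<times> J) (\<lambda>(u, v). F1 u ** matrix_inv (F2 v)) \<and>
      metric_conformal_to (I \<times> J) (\<lambda>(u, v). F1 u ** matrix_inv (F2 v)) q f r g"
    if "sol_left I q f F1" "sol_right J r g F2" for F1 F2
    using frame_product_cmc[OF sol_left_imp_derivative[OF that(1)]
        sol_right_imp_inverse_derivative[OF that(2)] q r assms(9)] .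
  ultimately show ?thesis
    by blast
qed

end
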